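(* For any $0<p<\frac{1}{2}$ and any confidence threshold $0<\delta<\frac{1}{2}$, there exists an adaptive noisy binary search algorithm for any linear order of $n$ elements that, after $$\frac{1}{I(p)}\left(\log_2 n+\mathcal{O}\big(\sqrt{\log n\log \delta^{-1}}\big)+\mathcal{O}(\log\delta^{-1})\right)$$ queries, returns the target correctly with probability at least $1-\delta$, for every choice of the target.
   Context: Noisy binary search model: the search space is a linear order $\{1,\dots,n\}$ containing an unknown target $v^*$, fixed in advance by an adversary who knows the algorithm. In each step the algorithm chooses an element $q$ and asks a comparison query, whose correct answer is "$<$" if $v^*<q$ and "$>$" otherwise. Each answer is, independently, incorrect (the opposite answer) with probability $p$ and correct with probability $1-p$. The algorithm is adaptive. $H(p)=-p\log_2 p-(1-p)\log_2(1-p)$ and $I(p)=1-H(p)$. *)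

theory Defs
  imports "HOL-Probability.Probability"
begin

definition H :: "real \<Rightarrow> real" where
  "H p = - p * log 2 p - (1 - p) * log 2 (1 - p)"

definition I :: "real \<Rightarrow> real" where
  "I p = 1 - H p"

text \<open>A deterministic adaptive algorithm is a decision tree: an inner node asks the
comparison query at element q; the left subtree is followed on answer "<",
the right subtree on answer ">".\<close>
datatype qtree = Leaf nat | Query nat qtree qtree

fun depth :: "qtree \<Rightarrow> nat" where
  "depth (Leaf x) = 0"
| "depth (Query q l r) = Suc (max (depth l) (depth r))"

fun succ_prob :: "real \<Rightarrow> nat \<Rightarrow> qtree \<Rightarrow> real" where
  "succ_prob p v (Leaf x) = (if x = v then 1 else 0)"
| "succ_prob p v (Query q l r) =
     (if v < q then (1 - p) * succ_prob p v l + p * succ_prob p v r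
      else p * succ_prob p v l + (1 - p) * succ_prob p v r)"

text \<open>A randomized adaptive algorithm is a probability distribution over decision trees.\<close>
definition rand_succ_prob :: "real \<Rightarrow> nat \<Rightarrow> qtree pmf \<Rightarrow> real" where
  "rand_succ_prob p v D = measure_pmf.expectation D (\<lambda>T. succ_prob p v T)"

end

theory Submission
  imports Defs
begin

text \<open>
  The algorithm keeps the unnormalised posterior weights w of the candidates, starting from
  the uniform prior, and queries at the weighted median m; a biased coin chooses between the
  queries m and m + 1 so that, for every candidate v, the expected weight of the side of the
  query containing v is at most half of the total weight plus w v.
  For a fixed target v consider its posterior odds t = (W - w v) / w v. A noisy answer
  multiplies the odds on the far side of the query by p / (1 - p) or (1 - p) / p, and
  concavity of x powr l (0 < l \<le> 1) turns the balance property into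
  E[t' powr l] \<le> g(l) * t powr l with g(l) \<le> exp (- l * ln 2 * I p + l^2 * (ln p)^2).
  A wrong output forces t \<ge> 1, so after k queries the error probability is at most
  g(l)^k * n powr l. Choosing l of order sqrt (ln (1/\<delta>) / ln n), capped by a constant
  depending on p, yields the stated number of queries.
\<close>

section \<open>Weights and the weighted median\<close>

definition total_weight :: "nat \<Rightarrow> (nat \<Rightarrow> real) \<Rightarrow> real" where
  "total_weight n w = (\<Sum>u\<in>{1..n}. w u)"

definition weight_below :: "nat \<Rightarrow> (nat \<Rightarrow> real) \<Rightarrow> nat \<Rightarrow> real" where
  "weight_below n w q = (\<Sum>u\<in>{u\<in>{1..n}. u < q}. w u)"

definition weighted_median :: "nat \<Rightarrow> (nat \<Rightarrow> real) \<Rightarrow> nat" where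
  "weighted_median n w = (LEAST m. total_weight n w \<le> 2 * weight_below n w (Suc m))"

text \<open>Unnormalised posterior after the answer b to the query q, where b = True encodes the
  answer "<".\<close>
definition reweight :: "real \<Rightarrow> (nat \<Rightarrow> real) \<Rightarrow> nat \<Rightarrow> bool \<Rightarrow> nat \<Rightarrow> real" where
  "reweight p w q b = (\<lambda>u. (if (u < q) = b then 1 - p else p) * w u)"

lemma total_weight_minus_weight_below:
  "total_weight n w - weight_below n w q = (\<Sum>u\<in>{u\<in>{1..n}. \<not> u < q}. w u)"
  unfolding total_weight_def weight_below_def
  using sum.Int_Diff[of "{1..n}" w "{u. u < q}"] by (simp add: Int_def set_diff_eq)

lemma weight_below_Suc:
  assumes "1 \<le> m" "m \<le> n"
  shows "weight_below n w (Suc m) = weight_below n w m + w m"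
proof -
  have "{u\<in>{1..n}. u < Suc m} = insert m {u\<in>{1..n}. u < m}" using assms by auto
  then show ?thesis unfolding weight_below_def by simp
qed

lemma total_weight_reweight:
  "total_weight n (reweight p w q b) =
     (if b then 1 - p else p) * weight_below n w q
     + (if b then p else 1 - p) * (total_weight n w - weight_below n w q)"
proof -
  define c where "c = (if b then 1 - p else p)"
  define c' where "c' = (if b then p else 1 - p)"
  have "reweight p w q b = (\<lambda>u. if u < q then c * w u else c' * w u)"
    by (auto simp: reweight_def c_def c'_def)
  then show ?thesis
    unfolding total_weight_minus_weight_below c_def[symmetric] c'_def[symmetric]
    unfolding total_weight_def weight_below_def
    by (simp add: sum.If_cases sum_distrib_left Int_def Collect_neg_eq[symmetric])
qed

lemma weighted_median_bounds:
  assumes "1 \<le> n" "\<forall>u\<in>{1..n}. 0 < w u"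
  defines "m \<equiv> weighted_median n w"
  shows "1 \<le> m" "m \<le> n" "2 * weight_below n w m \<le> total_weight n w"
    "2 * (total_weight n w - weight_below n w (Suc m)) \<le> total_weight n w"
proof -
  let ?P = "\<lambda>m. total_weight n w \<le> 2 * weight_below n w (Suc m)"
  have m_Least: "m = (LEAST m. ?P m)" unfolding m_def weighted_median_def ..
  have total_pos: "0 < total_weight n w"
    unfolding total_weight_def using assms(1,2) by (intro sum_pos) auto
  have "weight_below n w (Suc n) = total_weight n w"
    unfolding weight_below_def total_weight_def by (intro sum.cong) auto
  then have "?P n" using total_pos by simp
  then have "m \<le> n" and Pm: "?P m"
    unfolding m_Least by (auto intro: Least_le LeastI)
  then show "m \<le> n" by simp
  from Pm show "2 * (total_weight n w - weight_below n w (Suc m)) \<le> total_weight n w"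
    by simp
  have "weight_below n w (Suc 0) = 0" unfolding weight_below_def by (auto intro: sum.neutral)
  then have "m \<noteq> 0" using Pm total_pos by (metis linorder_not_le mult_zero_right)
  then show "1 \<le> m" by simp
  have "\<not> ?P (m - 1)" unfolding m_Least using \<open>m \<noteq> 0\<close> m_Least by (intro not_less_Least) auto
  then show "2 * weight_below n w m \<le> total_weight n w"
    using \<open>m \<noteq> 0\<close> by simp
qed

section \<open>The search algorithm\<close>

text \<open>The probability of asking Suc m rather than m, for the weighted median m. It makes the
  expected weight of the side of the query containing any v \<noteq> m exactly half of the total
  (see median_coin_balances).\<close>
definition median_coin :: "nat \<Rightarrow> (nat \<Rightarrow> real) \<Rightarrow> real" where
  "median_coin n w =
     (let m = weighted_median n w; A = weight_below n w m; B = total_weight n w - A - w m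
      in (B - A + w m) / (2 * w m))"

definition median_query :: "nat \<Rightarrow> (nat \<Rightarrow> real) \<Rightarrow> bool \<Rightarrow> nat" where
  "median_query n w b = (if b then Suc (weighted_median n w) else weighted_median n w)"

definition query_pmf :: "nat \<Rightarrow> qtree pmf \<Rightarrow> qtree pmf \<Rightarrow> qtree pmf" where
  "query_pmf q L R = L \<bind> (\<lambda>l. R \<bind> (\<lambda>r. return_pmf (Query q l r)))"

fun bayes_search :: "real \<Rightarrow> nat \<Rightarrow> nat \<Rightarrow> (nat \<Rightarrow> real) \<Rightarrow> qtree pmf" where
  "bayes_search p n 0 w = return_pmf (Leaf (weighted_median n w))"
| "bayes_search p n (Suc k) w = bernoulli_pmf (median_coin n w) \<bind> (\<lambda>b.
     query_pmf (median_query n w b)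
       (bayes_search p n k (reweight p w (median_query n w b) True))
       (bayes_search p n k (reweight p w (median_query n w b) False)))"

lemma set_pmf_query_pmf:
  "set_pmf (query_pmf q L R) = (\<Union>l\<in>set_pmf L. \<Union>r\<in>set_pmf R. {Query q l r})"
  by (simp add: query_pmf_def set_bind_pmf)

lemma depth_bayes_search: "T \<in> set_pmf (bayes_search p n k w) \<Longrightarrow> depth T = k"
  by (induction k arbitrary: w T) (auto simp: set_pmf_query_pmf set_bind_pmf)

lemma finite_set_pmf_bayes_search: "finite (set_pmf (bayes_search p n k w))"
  by (induction k arbitrary: w) (auto simp: set_pmf_query_pmf set_bind_pmf)

lemma expectation_bind_pmf_finite:
  fixes h :: "'b \<Rightarrow> real"
  assumes "finite (set_pmf M)" "\<And>x. x \<in> set_pmf M \<Longrightarrow> finite (set_pmf (f x))"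
  shows "measure_pmf.expectation (M \<bind> f) h =
           measure_pmf.expectation M (\<lambda>x. measure_pmf.expectation (f x) h)"
  using assms
  by (simp add: pmf_expectation_bind[of "set_pmf M"] integral_measure_pmf[of "set_pmf M"])

lemma rand_succ_prob_query_pmf:
  assumes "finite (set_pmf L)" "finite (set_pmf R)"
  shows "rand_succ_prob p v (query_pmf q L R) =
    (if v < q then (1 - p) * rand_succ_prob p v L + p * rand_succ_prob p v R
     else p * rand_succ_prob p v L + (1 - p) * rand_succ_prob p v R)"
proof -
  define a where "a = (if v < q then 1 - p else p)"
  define b where "b = (if v < q then p else 1 - p)"
  have succ_prob_Query:
    "succ_prob p v (Query q l r) = a * succ_prob p v l + b * succ_prob p v r" for l r
    by (simp add: a_def b_def)
  have "rand_succ_prob p v (query_pmf q L R) =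
      measure_pmf.expectation L (\<lambda>l. measure_pmf.expectation R
        (\<lambda>r. a * succ_prob p v l + b * succ_prob p v r))"
    using assms unfolding rand_succ_prob_def query_pmf_def
    by (simp add: expectation_bind_pmf_finite set_bind_pmf succ_prob_Query del: succ_prob.simps)
  also have "\<dots> = a * rand_succ_prob p v L + b * rand_succ_prob p v R"
    using assms unfolding rand_succ_prob_def
    by (simp add: integrable_measure_pmf_finite)
  finally show ?thesis by (simp add: a_def b_def)
qed

definition query_success :: "real \<Rightarrow> nat \<Rightarrow> nat \<Rightarrow> nat \<Rightarrow> (nat \<Rightarrow> real) \<Rightarrow> nat \<Rightarrow> real" where
  "query_success p n k v w q =
     (1 - p) * rand_succ_prob p v (bayes_search p n k (reweight p w q (v < q)))
     + p * rand_succ_prob p v (bayes_search p n k (reweight p w q (\<not> v < q)))"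

lemma rand_succ_prob_bayes_search_Suc:
  assumes "0 \<le> median_coin n w" "median_coin n w \<le> 1"
  shows "rand_succ_prob p v (bayes_search p n (Suc k) w) =
           median_coin n w * query_success p n k v w (median_query n w True)
           + (1 - median_coin n w) * query_success p n k v w (median_query n w False)"
proof -
  have "rand_succ_prob p v (query_pmf q (bayes_search p n k (reweight p w q True))
          (bayes_search p n k (reweight p w q False))) = query_success p n k v w q" for q
    by (simp add: rand_succ_prob_query_pmf finite_set_pmf_bayes_search query_success_def)
  then show ?thesis
    using assms unfolding rand_succ_prob_def bayes_search.simps
    by (subst pmf_expectation_bind[of UNIV])
      (auto simp: set_pmf_query_pmf finite_set_pmf_bayes_search UNIV_bool)
qed

section \<open>Odds against the target\<close>

definition side_weight :: "nat \<Rightarrow> (nat \<Rightarrow> real) \<Rightarrow> nat \<Rightarrow> nat \<Rightarrow> real" where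
  "side_weight n w v q =
     (if v < q then weight_below n w q else total_weight n w - weight_below n w q)"

definition odds_against :: "nat \<Rightarrow> (nat \<Rightarrow> real) \<Rightarrow> nat \<Rightarrow> real" where
  "odds_against n w v = (total_weight n w - w v) / w v"

definition side_odds :: "nat \<Rightarrow> (nat \<Rightarrow> real) \<Rightarrow> nat \<Rightarrow> nat \<Rightarrow> real" where
  "side_odds n w v q = (side_weight n w v q - w v) / w v"

lemma side_weight_bounds:
  assumes "\<forall>u\<in>{1..n}. 0 < w u" "v \<in> {1..n}"
  shows "w v \<le> side_weight n w v q" "side_weight n w v q \<le> total_weight n w"
proof -
  have nonneg: "\<forall>u\<in>{1..n}. 0 \<le> w u" using assms(1) by auto
  have "0 \<le> weight_below n w q" "0 \<le> total_weight n w - weight_below n w q"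
    unfolding total_weight_minus_weight_below unfolding weight_below_def
    using nonneg by (auto intro: sum_nonneg)
  then show "side_weight n w v q \<le> total_weight n w" unfolding side_weight_def by auto
  show "w v \<le> side_weight n w v q"
    unfolding side_weight_def total_weight_minus_weight_below unfolding weight_below_def
    using assms(2) nonneg by (auto intro: member_le_sum)
qed

lemma side_odds_bounds:
  assumes "\<forall>u\<in>{1..n}. 0 < w u" "v \<in> {1..n}"
  shows "0 \<le> side_odds n w v q" "side_odds n w v q \<le> odds_against n w v"
proof -
  have "0 < w v" using assms by auto
  then show "0 \<le> side_odds n w v q" "side_odds n w v q \<le> odds_against n w v"
    using side_weight_bounds[OF assms, of q] unfolding side_odds_def odds_against_def
    by (auto intro: divide_right_mono)
qed

lemma odds_against_pos:
  assumes "2 \<le> n" "\<forall>u\<in>{1..n}. 0 < w u" "v \<in> {1..n}"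
  shows "0 < odds_against n w v"
proof -
  define u :: nat where "u = (if v = 1 then 2 else 1)"
  have u: "u \<in> {1..n} - {v}" using assms(1) unfolding u_def by auto
  have "total_weight n w - w v = (\<Sum>u\<in>{1..n} - {v}. w u)"
    unfolding total_weight_def using assms(3) by (simp add: sum_diff1)
  also have "\<dots> > 0"
    using u assms(2) by (intro sum_pos2[of _ u]) (auto intro: less_imp_le)
  finally show ?thesis unfolding odds_against_def using assms by simp
qed

lemma one_le_odds_against:
  assumes "1 \<le> n" "\<forall>u\<in>{1..n}. 0 < w u" "v \<in> {1..n}" "weighted_median n w \<noteq> v"
  shows "1 \<le> odds_against n w v"
proof -
  define m where "m = weighted_median n w"
  note median = weighted_median_bounds[OF assms(1,2), folded m_def]
  have wv: "0 < w v" using assms by auto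
  have nonneg: "\<forall>u\<in>{1..n}. 0 \<le> w u" using assms(2) by auto
  have "w v \<le> weight_below n w m \<or> w v \<le> total_weight n w - weight_below n w (Suc m)"
  proof (cases "v < m")
    case True
    then have "w v \<le> weight_below n w m"
      unfolding weight_below_def using assms(3) nonneg by (intro member_le_sum) auto
    then show ?thesis ..
  next
    case False
    then have "\<not> v < Suc m" using assms(4) m_def by auto
    then have "w v \<le> total_weight n w - weight_below n w (Suc m)"
      unfolding total_weight_minus_weight_below using assms(3) nonneg
      by (intro member_le_sum) auto
    then show ?thesis ..
  qed
  then have "2 * w v \<le> total_weight n w" using median by (elim disjE) (simp_all add: algebra_simps)
  then show ?thesis unfolding odds_against_def using wv by (simp add: field_simps)
qed

lemma odds_against_reweight:
  fixes n q :: nat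
  assumes "0 < p" "p < 1" "0 < w v"
  defines "t \<equiv> odds_against n w v" and "e \<equiv> side_odds n w v q"
  shows "odds_against n (reweight p w q (v < q)) v = e + p / (1 - p) * (t - e)"
    "odds_against n (reweight p w q (\<not> v < q)) v = e + (1 - p) / p * (t - e)"
proof -
  define s where "s = side_weight n w v q"
  have total: "total_weight n (reweight p w q (v < q)) = (1 - p) * s + p * (total_weight n w - s)"
    "total_weight n (reweight p w q (\<not> v < q)) = p * s + (1 - p) * (total_weight n w - s)"
    unfolding total_weight_reweight s_def side_weight_def by auto
  have target: "reweight p w q (v < q) v = (1 - p) * w v" "reweight p w q (\<not> v < q) v = p * w v"
    unfolding reweight_def by auto
  show "odds_against n (reweight p w q (v < q)) v = e + p / (1 - p) * (t - e)"
    "odds_against n (reweight p w q (\<not> v < q)) v = e + (1 - p) / p * (t - e)"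
    unfolding t_def e_def odds_against_def side_odds_def s_def[symmetric] total target
    using assms(1-3) by (simp_all add: field_simps)
qed

lemma median_coin_range:
  assumes "1 \<le> n" "\<forall>u\<in>{1..n}. 0 < w u"
  shows "0 \<le> median_coin n w" "median_coin n w \<le> 1"
proof -
  define m where "m = weighted_median n w"
  define A where "A = weight_below n w m"
  define B where "B = total_weight n w - A - w m"
  note median = weighted_median_bounds[OF assms, folded m_def]
  have "0 < w m" using assms median by auto
  moreover have "2 * A \<le> total_weight n w" "2 * B \<le> total_weight n w"
    using median weight_below_Suc[of m n w] unfolding A_def B_def by auto
  moreover have "median_coin n w = (B - A + w m) / (2 * w m)"
    unfolding median_coin_def Let_def m_def A_def B_def ..
  ultimately show "0 \<le> median_coin n w" "median_coin n w \<le> 1"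
    unfolding B_def by auto
qed

lemma median_coin_balances:
  assumes "1 \<le> n" "\<forall>u\<in>{1..n}. 0 < w u" "v \<in> {1..n}"
  shows "median_coin n w * side_weight n w v (median_query n w True)
           + (1 - median_coin n w) * side_weight n w v (median_query n w False)
         \<le> (total_weight n w + w v) / 2"
proof -
  define m where "m = weighted_median n w"
  define A where "A = weight_below n w m"
  define W where "W = total_weight n w"
  define B where "B = W - A - w m"
  define \<pi> where "\<pi> = median_coin n w"
  note median = weighted_median_bounds[OF assms(1,2), folded m_def]
  have wm: "0 < w m" using assms median by auto
  have \<pi>_eq: "\<pi> = (B - A + w m) / (2 * w m)"
    unfolding \<pi>_def median_coin_def Let_def m_def[symmetric] A_def[symmetric]
      W_def[symmetric] B_def[symmetric] ..
  then have \<pi>: "\<pi> * w m = (B - A + w m) / 2" using wm by simp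
  have below_Suc: "weight_below n w (Suc m) = A + w m"
    unfolding A_def using median by (intro weight_below_Suc) auto
  have "0 < w v" using assms by auto
  then have "0 \<le> w v" by simp
  consider "v < m" | "v = m" | "m < v" by linarith
  then have "\<pi> * side_weight n w v (Suc m) + (1 - \<pi>) * side_weight n w v m \<le> (W + w v) / 2"
  proof cases
    case 1
    then have "\<pi> * side_weight n w v (Suc m) + (1 - \<pi>) * side_weight n w v m = A + \<pi> * w m"
      unfolding side_weight_def below_Suc A_def[symmetric] by (simp add: algebra_simps)
    then show ?thesis using \<pi> \<open>0 \<le> w v\<close> unfolding B_def by (simp add: field_simps)
  next
    case 2
    then have "\<pi> * side_weight n w v (Suc m) + (1 - \<pi>) * side_weight n w v m
        = (W + w v) / 2 - (B - A)^2 / (2 * w m)"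
      unfolding side_weight_def below_Suc A_def[symmetric] W_def[symmetric]
      using wm unfolding \<pi>_eq by (simp add: B_def field_simps power2_eq_square)
    moreover have "0 \<le> (B - A)^2 / (2 * w m)" using wm by simp
    ultimately show ?thesis by linarith
  next
    case 3
    then have "\<pi> * side_weight n w v (Suc m) + (1 - \<pi>) * side_weight n w v m = B + w m - \<pi> * w m"
      unfolding side_weight_def below_Suc A_def[symmetric] W_def[symmetric]
      by (simp add: B_def algebra_simps)
    then show ?thesis using \<pi> \<open>0 \<le> w v\<close> unfolding B_def by (simp add: field_simps)
  qed
  then show ?thesis unfolding median_query_def \<pi>_def W_def m_def by simp
qed

section \<open>The potential factor\<close>

lemma powr_le_tangent:
  fixes x y l :: real
  assumes "0 \<le> y" "0 < x" "0 < l" "l \<le> 1"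
  shows "y powr l \<le> x powr l + l * x powr (l - 1) * (y - x)"
proof -
  have x_powr: "x powr l = x powr (l - 1) * x"
    using assms by (simp add: powr_diff)
  show ?thesis
  proof (cases "y = 0")
    case True
    then show ?thesis using assms by (simp add: x_powr algebra_simps)
  next
    case False
    then have "(y / x) powr l * 1 powr (1 - l) \<le> l * (y / x) + (1 - l) * 1"
      using assms by (intro Youngs_inequality_0) auto
    then have "x powr l * (y / x) powr l \<le> x powr l * (l * (y / x) + (1 - l))"
      by (intro mult_left_mono) auto
    moreover have "x powr l * (y / x) powr l = y powr l"
      using assms by (simp add: powr_divide)
    moreover have "x powr l * (l * (y / x) + (1 - l)) = x powr l + l * x powr (l - 1) * (y - x)"
      unfolding x_powr using assms by (simp add: field_simps)
    ultimately show ?thesis by simp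
  qed
qed

text \<open>The value of answer_moment p l 1 (1/2): the expected change of the l-th power of the
  odds under a perfectly balanced query.\<close>
definition potential_factor :: "real \<Rightarrow> real \<Rightarrow> real" where
  "potential_factor p l = (1 - p) * (1 / (2 * (1 - p))) powr l + p * (1 / (2 * p)) powr l"

lemma potential_factor_nonneg: "0 < p \<Longrightarrow> p < 1 \<Longrightarrow> 0 \<le> potential_factor p l"
  unfolding potential_factor_def by simp

text \<open>If the odds against the target are t, of which e come from candidates on its own side of
  the query, a correct answer scales the other part t - e by p / (1 - p) and a wrong one by
  (1 - p) / p (odds_against_reweight). This is the expected l-th power of the new odds.\<close>
definition answer_moment :: "real \<Rightarrow> real \<Rightarrow> real \<Rightarrow> real \<Rightarrow> real" where
  "answer_moment p l t e =
     (1 - p) * (e + p / (1 - p) * (t - e)) powr l + p * (e + (1 - p) / p * (t - e)) powr l"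

lemma answer_moment_le_affine:
  assumes "0 < p" "p < 1/2" "0 < l" "l \<le> 1" "0 < t"
  obtains \<sigma> where "0 \<le> \<sigma>"
    "\<And>e. 0 \<le> e \<Longrightarrow> e \<le> t \<Longrightarrow>
       answer_moment p l t e \<le> potential_factor p l * t powr l + \<sigma> * (e - t / 2)"
proof
  txt \<open>Tangent lines of x powr l at the two values c0, c1 reached for e = t / 2.\<close>
  define c0 where "c0 = t / (2 * (1 - p))"
  define c1 where "c1 = t / (2 * p)"
  have c0: "0 < c0" and c1: "0 < c1" and "c0 \<le> c1"
    using assms unfolding c0_def c1_def by (auto intro: divide_left_mono)
  then have slopes: "c1 powr (l - 1) \<le> c0 powr (l - 1)"
    using assms by (intro powr_mono2') auto
  show "0 \<le> l * (1 - 2 * p) * (c0 powr (l - 1) - c1 powr (l - 1))"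
    using assms slopes by simp
  have factor: "(1 - p) * c0 powr l + p * c1 powr l = potential_factor p l * t powr l"
    using assms unfolding c0_def c1_def potential_factor_def
    by (simp add: powr_mult[symmetric] algebra_simps)
  fix e assume e: "0 \<le> e" "e \<le> t"
  have "1 - p \<noteq> 0" using assms by simp
  define y0 where "y0 = e + p / (1 - p) * (t - e)"
  define y1 where "y1 = e + (1 - p) / p * (t - e)"
  have tangents: "y0 powr l \<le> c0 powr l + l * c0 powr (l - 1) * (y0 - c0)"
    "y1 powr l \<le> c1 powr l + l * c1 powr (l - 1) * (y1 - c1)"
    using assms e c0 c1 unfolding y0_def y1_def by (intro powr_le_tangent; simp)+
  have linear: "(1 - p) * y0 = (1 - p) * e + p * (t - e)" "p * y1 = p * e + (1 - p) * (t - e)"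
    "(1 - p) * c0 = t / 2" "p * c1 = t / 2"
    using assms \<open>1 - p \<noteq> 0\<close> unfolding y0_def y1_def c0_def c1_def
    by (simp_all add: field_simps)
  have "answer_moment p l t e \<le>
      (1 - p) * (c0 powr l + l * c0 powr (l - 1) * (y0 - c0))
      + p * (c1 powr l + l * c1 powr (l - 1) * (y1 - c1))"
    unfolding answer_moment_def y0_def[symmetric] y1_def[symmetric]
    using assms tangents by (intro add_mono mult_left_mono) auto
  also have "\<dots> = (1 - p) * c0 powr l + p * c1 powr l
      + l * c0 powr (l - 1) * ((1 - p) * y0 - (1 - p) * c0)
      + l * c1 powr (l - 1) * (p * y1 - p * c1)"
    by (simp add: algebra_simps)
  also have "\<dots> = potential_factor p l * t powr l
      + l * (1 - 2 * p) * (c0 powr (l - 1) - c1 powr (l - 1)) * (e - t / 2)"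
    unfolding linear factor[symmetric] by (simp add: algebra_simps)
  finally show "answer_moment p l t e \<le> potential_factor p l * t powr l
      + l * (1 - 2 * p) * (c0 powr (l - 1) - c1 powr (l - 1)) * (e - t / 2)" .
qed

lemma ln2_mult_H: "ln 2 * H p = - p * ln p - (1 - p) * ln (1 - p)"
  unfolding H_def log_def by (simp add: field_simps)

lemma ln_inverse_double:
  fixes x :: real
  shows "0 < x \<Longrightarrow> ln (1 / (2 * x)) = - ln 2 - ln x"
  by (simp add: ln_div ln_mult)

lemma I_pos:
  assumes "0 < p" "p < 1/2"
  shows "0 < I p"
proof -
  have "0 < 1 - p" "1 / (2 * (1 - p)) \<noteq> 1" using assms by simp_all
  then have strict: "ln (1 / (2 * (1 - p))) < 1 / (2 * (1 - p)) - 1"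
    using ln_le_minus_one[of "1 / (2 * (1 - p))"] ln_eq_minus_one[of "1 / (2 * (1 - p))"]
    by force
  have weak: "ln (1 / (2 * p)) \<le> 1 / (2 * p) - 1"
    using assms by (intro ln_le_minus_one) simp
  have "(1 - p) * (- ln 2 - ln (1 - p)) + p * (- ln 2 - ln p)
      < (1 - p) * (1 / (2 * (1 - p)) - 1) + p * (1 / (2 * p) - 1)"
    using strict weak assms \<open>0 < 1 - p\<close>
    unfolding ln_inverse_double[OF \<open>0 < 1 - p\<close>] ln_inverse_double[OF assms(1)]
    by (intro add_less_le_mono mult_strict_left_mono mult_left_mono) auto
  also have "\<dots> = 0" using assms by (simp add: field_simps)
  finally have "ln 2 * H p < ln 2" unfolding ln2_mult_H by (simp add: algebra_simps)
  then show ?thesis unfolding I_def by simp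
qed

lemma potential_factor_le_exp:
  assumes "0 < p" "p < 1/2" "0 < l" "l * - ln p \<le> 1"
  shows "potential_factor p l \<le> exp (- l * (ln 2 * I p) + l^2 * (ln p)^2)"
proof -
  define a where "a = - ln (1 - p)"
  define b where "b = - ln p"
  have "0 < 1 - p" using assms by simp
  have "0 \<le> a" "a \<le> b" unfolding a_def b_def using assms by auto
  have lb: "0 \<le> l * b" "l * b \<le> 1"
    using assms \<open>0 \<le> a\<close> \<open>a \<le> b\<close> by (simp, simp add: b_def)
  have "l * a \<le> l * b" using assms \<open>a \<le> b\<close> by simp
  then have la: "0 \<le> l * a" "l * a \<le> 1" using assms \<open>0 \<le> a\<close> lb by (simp, linarith)
  have "a^2 \<le> b^2" using \<open>0 \<le> a\<close> \<open>a \<le> b\<close> by (intro power_mono)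
  then have "(1 - p) * a^2 + p * b^2 \<le> (1 - p) * b^2 + p * b^2"
    using assms by (intro add_mono mult_left_mono) auto
  then have second_moment: "(1 - p) * a^2 + p * b^2 \<le> b^2" by (simp add: algebra_simps)
  have "potential_factor p l =
      (1 - p) * exp (l * ln (1 / (2 * (1 - p)))) + p * exp (l * ln (1 / (2 * p)))"
    using assms unfolding potential_factor_def powr_def by simp
  also have "\<dots> = exp (- l * ln 2) * ((1 - p) * exp (l * a) + p * exp (l * b))"
  proof -
    have "exp (l * (- ln 2 - ln x)) = exp (- l * ln 2) * exp (l * - ln x)" for x
      by (simp add: exp_add[symmetric] algebra_simps)
    then show ?thesis
      unfolding a_def b_def ln_inverse_double[OF \<open>0 < 1 - p\<close>] ln_inverse_double[OF assms(1)]
      by (simp add: algebra_simps)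
  qed
  also have "\<dots> \<le> exp (- l * ln 2)
      * ((1 - p) * (1 + l * a + (l * a)^2) + p * (1 + l * b + (l * b)^2))"
    using assms la lb by (intro mult_left_mono add_mono exp_bound) auto
  also have "\<dots> = exp (- l * ln 2)
      * (1 + l * ((1 - p) * a + p * b) + l^2 * ((1 - p) * a^2 + p * b^2))"
    by (simp add: algebra_simps power2_eq_square)
  also have "\<dots> \<le> exp (- l * ln 2) * (1 + l * ((1 - p) * a + p * b) + l^2 * b^2)"
    using second_moment by (intro mult_left_mono add_left_mono) auto
  also have "\<dots> \<le> exp (- l * ln 2) * exp (l * ((1 - p) * a + p * b) + l^2 * b^2)"
    using exp_ge_add_one_self by (intro mult_left_mono) (auto simp: add.assoc)
  also have "\<dots> = exp (- l * (ln 2 * I p) + l^2 * (ln p)^2)"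
    unfolding I_def a_def b_def right_diff_distrib ln2_mult_H
    by (simp add: exp_add[symmetric] algebra_simps)
  finally show ?thesis .
qed

section \<open>Failure probability\<close>

lemma query_failure_le:
  assumes "0 < p" "p < 1" "\<forall>u\<in>{1..n}. 0 < w u" "v \<in> {1..n}" "0 \<le> c"
    and continuation: "\<And>w'. \<forall>u\<in>{1..n}. 0 < w' u \<Longrightarrow>
      1 - rand_succ_prob p v (bayes_search p n k w') \<le> c * odds_against n w' v powr l"
  shows "1 - query_success p n k v w q
    \<le> c * answer_moment p l (odds_against n w v) (side_odds n w v q)"
proof -
  have "\<forall>u\<in>{1..n}. 0 < reweight p w q b u" for b
    using assms(1-3) unfolding reweight_def by auto
  note failure = continuation[OF this]
  have "0 < w v" using assms(3,4) by auto
  have "1 - query_success p n k v w q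
      = (1 - p) * (1 - rand_succ_prob p v (bayes_search p n k (reweight p w q (v < q))))
        + p * (1 - rand_succ_prob p v (bayes_search p n k (reweight p w q (\<not> v < q))))"
    unfolding query_success_def by (simp add: algebra_simps)
  also have "\<dots> \<le> (1 - p) * (c * odds_against n (reweight p w q (v < q)) v powr l)
        + p * (c * odds_against n (reweight p w q (\<not> v < q)) v powr l)"
    using assms(1,2) failure by (intro add_mono mult_left_mono) auto
  also have "\<dots> = c * answer_moment p l (odds_against n w v) (side_odds n w v q)"
    unfolding answer_moment_def
      odds_against_reweight[where w = w and v = v, OF assms(1,2) \<open>0 < w v\<close>]
    by (simp add: algebra_simps)
  finally show ?thesis .
qed

lemma bayes_search_failure_le:
  assumes "0 < p" "p < 1/2" "2 \<le> n" "0 < l" "l \<le> 1" "v \<in> {1..n}"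
  shows "\<forall>u\<in>{1..n}. 0 < w u \<Longrightarrow> 1 - rand_succ_prob p v (bayes_search p n k w)
    \<le> potential_factor p l ^ k * odds_against n w v powr l"
proof (induction k arbitrary: w)
  case 0
  show ?case
  proof (cases "weighted_median n w = v")
    case False
    then have "1 \<le> odds_against n w v"
      using 0 assms by (intro one_le_odds_against) auto
    then have "1 \<le> odds_against n w v powr l"
      using assms by (intro ge_one_powr_ge_zero) auto
    then show ?thesis by (simp add: rand_succ_prob_def)
  qed (simp add: rand_succ_prob_def)
next
  case (Suc k)
  define \<pi> where "\<pi> = median_coin n w"
  define t where "t = odds_against n w v"
  define e where "e b = side_odds n w v (median_query n w b)" for b
  define g where "g = potential_factor p l"
  have "1 \<le> n" "0 < w v" using assms Suc.prems by auto
  have \<pi>: "0 \<le> \<pi>" "\<pi> \<le> 1" unfolding \<pi>_def using median_coin_range \<open>1 \<le> n\<close> Suc.prems by auto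
  have "0 < t" unfolding t_def using odds_against_pos assms Suc.prems by auto
  have e: "0 \<le> e b" "e b \<le> t" for b
    unfolding e_def t_def using side_odds_bounds Suc.prems assms(6) by auto
  have balance: "\<pi> * e True + (1 - \<pi>) * e False \<le> t / 2"
  proof -
    have "\<pi> * e True + (1 - \<pi>) * e False
        = (\<pi> * side_weight n w v (median_query n w True)
           + (1 - \<pi>) * side_weight n w v (median_query n w False) - w v) / w v"
      unfolding e_def side_odds_def using \<open>0 < w v\<close> by (simp add: field_simps)
    also have "\<dots> \<le> ((total_weight n w + w v) / 2 - w v) / w v"
      unfolding \<pi>_def using median_coin_balances[OF \<open>1 \<le> n\<close> Suc.prems assms(6)] \<open>0 < w v\<close>
      by (intro divide_right_mono) auto
    also have "\<dots> = t / 2"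
      unfolding t_def odds_against_def using \<open>0 < w v\<close> by (simp add: field_simps)
    finally show ?thesis .
  qed
  obtain \<sigma> where "0 \<le> \<sigma>" and affine:
    "\<And>e. 0 \<le> e \<Longrightarrow> e \<le> t \<Longrightarrow> answer_moment p l t e \<le> g * t powr l + \<sigma> * (e - t / 2)"
    using answer_moment_le_affine assms \<open>0 < t\<close> unfolding g_def by metis
  have query:
    "1 - query_success p n k v w (median_query n w b) \<le> g ^ k * answer_moment p l t (e b)" for b
    unfolding t_def e_def g_def using assms Suc.prems
    by (intro query_failure_le Suc.IH zero_le_power potential_factor_nonneg) auto
  have averaged: "\<pi> * answer_moment p l t (e True) + (1 - \<pi>) * answer_moment p l t (e False)
      \<le> g * t powr l + \<sigma> * (\<pi> * e True + (1 - \<pi>) * e False - t / 2)"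
  proof -
    have "\<pi> * answer_moment p l t (e True) + (1 - \<pi>) * answer_moment p l t (e False)
        \<le> \<pi> * (g * t powr l + \<sigma> * (e True - t / 2))
          + (1 - \<pi>) * (g * t powr l + \<sigma> * (e False - t / 2))"
      using \<pi> affine[OF e] by (intro add_mono mult_left_mono) auto
    also have "\<dots> = g * t powr l + \<sigma> * (\<pi> * e True + (1 - \<pi>) * e False - t / 2)"
      by (simp add: field_simps)
    finally show ?thesis .
  qed
  have "0 \<le> g ^ k" unfolding g_def using assms by (simp add: potential_factor_nonneg)
  have "1 - rand_succ_prob p v (bayes_search p n (Suc k) w)
      = \<pi> * (1 - query_success p n k v w (median_query n w True))
        + (1 - \<pi>) * (1 - query_success p n k v w (median_query n w False))"
    unfolding rand_succ_prob_bayes_search_Suc[OF \<pi>[unfolded \<pi>_def]] \<pi>_def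
    by (simp add: algebra_simps)
  also have "\<dots> \<le> \<pi> * (g ^ k * answer_moment p l t (e True))
      + (1 - \<pi>) * (g ^ k * answer_moment p l t (e False))"
    using \<pi> query by (intro add_mono mult_left_mono) auto
  also have "\<dots> = g ^ k
      * (\<pi> * answer_moment p l t (e True) + (1 - \<pi>) * answer_moment p l t (e False))"
    by (simp add: algebra_simps)
  also have "\<dots> \<le> g ^ k * (g * t powr l)"
    using averaged balance \<open>0 \<le> \<sigma>\<close> \<open>0 \<le> g ^ k\<close>
    by (intro mult_left_mono order_trans[OF averaged]) (auto simp: mult_nonneg_nonpos)
  also have "\<dots> = g ^ Suc k * t powr l" by simp
  finally show ?case unfolding g_def t_def .
qed

lemma bayes_search_reliable:
  assumes "0 < p" "p < 1/2" "2 \<le> n" "0 < l" "l \<le> 1" "l * - ln p \<le> 1" "0 < \<delta>"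
    and length: "ln n + ln (1 / \<delta>) / l \<le> k * (ln 2 * I p - l * (ln p)^2)"
    and "v \<in> {1..n}"
  shows "1 - \<delta> \<le> rand_succ_prob p v (bayes_search p n k (\<lambda>_. 1))"
proof -
  have "odds_against n (\<lambda>_. 1) v = n - 1"
    unfolding odds_against_def total_weight_def using assms(3) by (simp add: of_nat_diff)
  then have "odds_against n (\<lambda>_. 1) v powr l \<le> real n powr l"
    using assms(3,4) by (intro powr_mono2) auto
  also have "\<dots> = exp (l * ln n)" using assms(3) by (simp add: powr_def)
  finally have odds: "odds_against n (\<lambda>_. 1) v powr l \<le> exp (l * ln n)" .
  have factor: "potential_factor p l ^ k \<le> exp (- l * (ln 2 * I p) + l^2 * (ln p)^2) ^ k"
    using assms by (intro power_mono potential_factor_le_exp potential_factor_nonneg) auto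
  have "1 - rand_succ_prob p v (bayes_search p n k (\<lambda>_. 1))
      \<le> potential_factor p l ^ k * odds_against n (\<lambda>_. 1) v powr l"
    using assms by (intro bayes_search_failure_le) auto
  also have "\<dots> \<le> exp (- l * (ln 2 * I p) + l^2 * (ln p)^2) ^ k * exp (l * ln n)"
    using factor odds by (intro mult_mono) auto
  also have "\<dots> = exp (l * (ln n - k * (ln 2 * I p - l * (ln p)^2)))"
    by (simp add: exp_of_nat_mult[symmetric] exp_add[symmetric] algebra_simps power2_eq_square)
  also have "\<dots> \<le> exp (- ln (1 / \<delta>))"
    using length \<open>0 < l\<close> by (simp add: field_simps)
  also have "\<dots> = \<delta>" using \<open>0 < \<delta>\<close> by (simp add: ln_div)
  finally show ?thesis by simp
qed

section \<open>Choice of the parameters\<close>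

lemma min_sqrt_tradeoff:
  fixes N L l0 :: real
  assumes "0 < N" "0 < L" "0 < l0"
  defines "l \<equiv> min l0 (sqrt (L / N))"
  shows "l * N \<le> sqrt (N * L)" "L / l \<le> sqrt (N * L) + L / l0"
proof -
  have "sqrt (L / N) * N = sqrt (N * L)" "L / sqrt (L / N) = sqrt (N * L)"
    using assms by (simp_all add: real_sqrt_divide real_sqrt_mult field_simps)
  moreover have "l * N \<le> sqrt (L / N) * N" using assms unfolding l_def by simp
  moreover have "L / l = L / l0 \<or> L / l = L / sqrt (L / N)" unfolding l_def by linarith
  ultimately show "l * N \<le> sqrt (N * L)" "L / l \<le> sqrt (N * L) + L / l0"
    using assms by auto
qed

lemma inverse_diff_le:
  fixes \<iota> x :: real
  assumes "0 < \<iota>" "0 \<le> x" "x \<le> \<iota> / 2"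
  shows "1 / (\<iota> - x) \<le> (1 + 2 * x / \<iota>) / \<iota>"
proof -
  have "\<iota> \<le> (1 + 2 * x / \<iota>) * (\<iota> - x)"
  proof -
    have "(1 + 2 * x / \<iota>) * (\<iota> - x) = \<iota> + x * (1 - 2 * x / \<iota>)"
      using assms by (simp add: field_simps)
    moreover have "0 \<le> 1 - 2 * x / \<iota>" using assms by (simp add: field_simps)
    then have "0 \<le> x * (1 - 2 * x / \<iota>)" using assms by simp
    ultimately show ?thesis by simp
  qed
  then show ?thesis using assms by (simp add: field_simps)
qed

lemma search_length_le:
  fixes \<iota> K l0 N L :: real
  assumes "0 < \<iota>" "0 \<le> K" "0 < l0" "l0 * K \<le> \<iota> / 2" "0 < N" "0 < L"
  defines "l \<equiv> min l0 (sqrt (L / N))"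
  shows "(N + L / l) / (\<iota> - l * K)
    \<le> (N + (1 + 2 * K / \<iota>) * sqrt (N * L) + (1 / l0 + 2 * K / \<iota>) * L) / \<iota>"
proof -
  have "0 < l" "l \<le> l0" using assms unfolding l_def by auto
  then have "l * K \<le> \<iota> / 2" using assms by (meson mult_right_mono order_trans)
  have tradeoff: "l * N \<le> sqrt (N * L)" "L / l \<le> sqrt (N * L) + L / l0"
    using min_sqrt_tradeoff assms unfolding l_def by auto
  have "(N + L / l) / (\<iota> - l * K) = (N + L / l) * (1 / (\<iota> - l * K))" by simp
  also have "\<dots> \<le> (N + L / l) * ((1 + 2 * (l * K) / \<iota>) / \<iota>)"
    using assms \<open>0 < l\<close> \<open>l * K \<le> \<iota> / 2\<close> by (intro mult_left_mono inverse_diff_le) auto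
  also have "\<dots> = (N + L / l + 2 * K / \<iota> * (l * N + L)) / \<iota>"
    using \<open>0 < l\<close> by (simp add: field_simps)
  also have "\<dots> \<le> (N + (sqrt (N * L) + L / l0) + 2 * K / \<iota> * (sqrt (N * L) + L)) / \<iota>"
    using assms tradeoff by (intro divide_right_mono add_mono mult_left_mono) auto
  also have "\<dots> = (N + (1 + 2 * K / \<iota>) * sqrt (N * L) + (1 / l0 + 2 * K / \<iota>) * L) / \<iota>"
    using assms(1) by (simp add: field_simps)
  finally show ?thesis .
qed

lemma reliable_bayes_search_length:
  assumes "0 < p" "p < 1/2" "2 \<le> n" "0 < \<delta>" "\<delta> < 1/2"
    and "0 < l0" "l0 \<le> 1" "l0 * - ln p \<le> 1" "l0 * (ln p)^2 \<le> ln 2 * I p / 2"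
  defines "\<iota> \<equiv> ln 2 * I p" and "K \<equiv> (ln p)^2" and "N \<equiv> ln n" and "L \<equiv> ln (1 / \<delta>)"
  shows "\<exists>k. real k \<le> (N + (1 + 2 * K / \<iota>) * sqrt (N * L) + (1 / l0 + 2 * K / \<iota> + \<iota> / ln 2) * L) / \<iota>
           \<and> (\<forall>v\<in>{1..n}. 1 - \<delta> \<le> rand_succ_prob p v (bayes_search p n k (\<lambda>_. 1)))"
proof -
  have "ln 2 < L" unfolding L_def using assms(4,5) by (simp add: field_simps)
  then have "0 < L" using ln_gt_zero[of 2] by linarith
  have "0 < \<iota>" "0 \<le> K" "0 < N" unfolding \<iota>_def K_def N_def using I_pos assms(1-3) by auto
  txt \<open>l = sqrt (L / N) balances the two error terms l * N and L / l (min_sqrt_tradeoff).\<close>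
  define l where "l = min l0 (sqrt (L / N))"
  define X where "X = (N + L / l) / (\<iota> - l * K)"
  define k where "k = nat \<lceil>X\<rceil>"
  have "0 < l" "l \<le> l0" unfolding l_def using assms(6) \<open>0 < L\<close> \<open>0 < N\<close> by auto
  then have "l * K \<le> \<iota> / 2"
    using assms(9) \<open>0 \<le> K\<close> unfolding \<iota>_def K_def by (meson mult_right_mono order_trans)
  then have "0 < \<iota> - l * K" using \<open>0 < \<iota>\<close> by simp
  have "l * - ln p \<le> l0 * - ln p" using \<open>l \<le> l0\<close> assms(1,2) by (intro mult_right_mono) auto
  then have "l * - ln p \<le> 1" using assms(8) by linarith
  have "X \<le> k" unfolding k_def by (rule real_nat_ceiling_ge)
  then have "N + L / l \<le> k * (\<iota> - l * K)"
    using \<open>0 < \<iota> - l * K\<close> unfolding X_def by (simp add: field_simps)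
  then have reliable: "\<forall>v\<in>{1..n}. 1 - \<delta> \<le> rand_succ_prob p v (bayes_search p n k (\<lambda>_. 1))"
    using assms(1-4,7) \<open>0 < l\<close> \<open>l \<le> l0\<close> \<open>l * - ln p \<le> 1\<close>
    unfolding N_def L_def \<iota>_def K_def by (intro ballI bayes_search_reliable) auto
  have "0 \<le> X" unfolding X_def
    using \<open>0 < N\<close> \<open>0 < L\<close> \<open>0 < l\<close> \<open>0 < \<iota> - l * K\<close> by simp
  then have "real k \<le> X + 1" unfolding k_def by simp
  also have "\<dots> \<le> X + L / ln 2" using \<open>ln 2 < L\<close> by (simp add: le_divide_eq)
  also have "\<dots> \<le> (N + (1 + 2 * K / \<iota>) * sqrt (N * L) + (1 / l0 + 2 * K / \<iota>) * L) / \<iota> + L / ln 2"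
    unfolding X_def l_def using assms(6,9) \<open>0 < \<iota>\<close> \<open>0 \<le> K\<close> \<open>0 < N\<close> \<open>0 < L\<close>
    by (intro add_right_mono search_length_le) (auto simp: \<iota>_def K_def)
  also have "\<dots> = (N + (1 + 2 * K / \<iota>) * sqrt (N * L) + (1 / l0 + 2 * K / \<iota> + \<iota> / ln 2) * L) / \<iota>"
    using \<open>0 < \<iota>\<close> by (simp add: field_simps)
  finally show ?thesis using reliable by blast
qed

lemma exists_reliable_bayes_search:
  assumes "0 < p" "p < 1/2" "1 \<le> n" "0 < \<delta>" "\<delta> < 1/2"
    and "0 < l0" "l0 \<le> 1" "l0 * - ln p \<le> 1" "l0 * (ln p)^2 \<le> ln 2 * I p / 2"
    and "1 + 2 * (ln p)^2 / (ln 2 * I p) \<le> C * ln 2"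
    and "1 / l0 + 2 * (ln p)^2 / (ln 2 * I p) + I p \<le> C * ln 2"
  shows "\<exists>k. real k \<le> (1 / I p) * (log 2 n + C * sqrt (ln n * ln (1 / \<delta>)) + C * ln (1 / \<delta>))
           \<and> (\<forall>v\<in>{1..n}. 1 - \<delta> \<le> rand_succ_prob p v (bayes_search p n k (\<lambda>_. 1)))"
proof -
  have "0 < I p" using I_pos assms(1,2) by simp
  have "0 < ln (1 / \<delta>)" using assms(4,5) by simp
  have "0 < 1 / l0 + 2 * (ln p)^2 / (ln 2 * I p) + I p"
    using assms(6) \<open>0 < I p\<close> by (intro add_pos_pos add_pos_nonneg) auto
  then have "0 < C * ln 2" using assms(11) by linarith
  then have "0 < C" by (simp add: zero_less_mult_iff)
  show ?thesis
  proof (cases "n = 1")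
    case True
    have "weighted_median 1 (\<lambda>_. 1) = 1"
      using weighted_median_bounds(1,2)[of 1 "\<lambda>_. 1"] by simp
    then show ?thesis
      using True assms(4) \<open>0 < I p\<close> \<open>0 < C\<close> \<open>0 < ln (1 / \<delta>)\<close>
      by (intro exI[of _ 0]) (simp add: rand_succ_prob_def)
  next
    case False
    then obtain k where k: "real k \<le> (ln n
        + (1 + 2 * (ln p)^2 / (ln 2 * I p)) * sqrt (ln n * ln (1 / \<delta>))
        + (1 / l0 + 2 * (ln p)^2 / (ln 2 * I p) + I p) * ln (1 / \<delta>)) / (ln 2 * I p)"
      and reliable: "\<forall>v\<in>{1..n}. 1 - \<delta> \<le> rand_succ_prob p v (bayes_search p n k (\<lambda>_. 1))"
      using reliable_bayes_search_length[of p n \<delta> l0] assms(1-9) by auto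
    have "0 \<le> sqrt (ln n * ln (1 / \<delta>))" using assms(3) \<open>0 < ln (1 / \<delta>)\<close> by simp
    then have "real k \<le> (ln n + C * ln 2 * sqrt (ln n * ln (1 / \<delta>)) + C * ln 2 * ln (1 / \<delta>))
        / (ln 2 * I p)"
      using k assms(10,11) \<open>0 < I p\<close> \<open>0 < ln (1 / \<delta>)\<close>
      by (elim order_trans, intro divide_right_mono add_mono mult_right_mono) auto
    also have "\<dots> = (1 / I p) * (log 2 n + C * sqrt (ln n * ln (1 / \<delta>)) + C * ln (1 / \<delta>))"
      unfolding log_def by (simp add: field_simps)
    finally show ?thesis using reliable by blast
  qed
qed

theorem theorem4:
  fixes p :: real
  assumes "0 < p" and "p < 1/2"
  shows "\<exists>C > 0. \<forall>(\<delta>::real) (n::nat). 0 < \<delta> \<longrightarrow> \<delta> < 1/2 \<longrightarrow> 1 \<le> n \<longrightarrow>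
     (\<exists>D :: qtree pmf.
        (\<forall>T \<in> set_pmf D. real (depth T) \<le>
            (1 / I p) * (log 2 (real n)
               + C * sqrt (ln (real n) * ln (1 / \<delta>))
               + C * ln (1 / \<delta>)))
      \<and> (\<forall>v \<in> {1..n}. rand_succ_prob p v D \<ge> 1 - \<delta>))"
proof -
  define \<iota> where "\<iota> = ln 2 * I p"
  define K where "K = (ln p)^2"
  define l0 where "l0 = min 1 (min (1 / - ln p) (\<iota> / (2 * K)))"
  define C where "C = (1 + 4 * K / \<iota> + 1 / l0 + I p) / ln 2"
  have "0 < \<iota>" "0 < K" "0 < - ln p" unfolding \<iota>_def K_def using I_pos assms by auto
  then have "0 < l0" unfolding l0_def by simp
  have "l0 \<le> 1" "l0 \<le> 1 / - ln p" "l0 \<le> \<iota> / (2 * K)" unfolding l0_def by auto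
  then have l0: "0 < l0" "l0 \<le> 1" "l0 * - ln p \<le> 1" "l0 * (ln p)^2 \<le> ln 2 * I p / 2"
    using \<open>0 < l0\<close> \<open>0 < K\<close> \<open>0 < - ln p\<close> unfolding K_def[symmetric] \<iota>_def[symmetric]
    by (simp_all only: pos_le_divide_eq)
  have "0 < C" unfolding C_def using \<open>0 < \<iota>\<close> \<open>0 < K\<close> l0 I_pos[OF assms]
    by (intro divide_pos_pos add_pos_pos) auto
  moreover have "1 + 2 * K / \<iota> \<le> C * ln 2" "1 / l0 + 2 * K / \<iota> + I p \<le> C * ln 2"
    unfolding C_def using \<open>0 < \<iota>\<close> \<open>0 < K\<close> l0 I_pos[OF assms] by (simp_all add: field_simps)
  ultimately show ?thesis
    using exists_reliable_bayes_search[OF assms _ _ _ l0] depth_bayes_search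
    unfolding \<iota>_def K_def by (intro exI[of _ C]) (metis (no_types, lifting))
qed

end
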